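(* If a countable equivalence structure $\mathcal{A}$ has finitely many infinite equivalence classes, then $\mathcal{A}$ is relatively $\Delta^0_2$ bi-embeddably categorical.
   Context: An equivalence structure $\mathcal{A}=(A,E)$ has universe $A\subseteq\omega$ and an equivalence relation $E$ on $A$; structures are identified with their atomic diagrams. Two structures are bi-embeddable if each embeds into the other; such a structure is a bi-embeddable copy. A countable structure $\mathcal{A}$ is relatively $\Delta^0_2$ bi-embeddably categorical if for every bi-embeddable copy $\mathcal{B}$ of $\mathcal{A}$ there are embeddings $\mathcal{A}\hookrightarrow\mathcal{B}$ and $\mathcal{B}\hookrightarrow\mathcal{A}$ that are $\Delta^0_2$ relative to $\mathcal{A}\oplus\mathcal{B}$ (i.e., computable in $(\mathcal{A}\oplus\mathcal{B})'$). *)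

theory Defs
  imports Main "HOL-Library.Nat_Bijection"
begin

definition eq_structure :: "nat set \<Rightarrow> (nat \<times> nat) set \<Rightarrow> bool" where
  "eq_structure A E \<longleftrightarrow> equiv A E"

definition is_embedding ::
  "nat set \<Rightarrow> (nat \<times> nat) set \<Rightarrow> nat set \<Rightarrow> (nat \<times> nat) set \<Rightarrow> (nat \<Rightarrow> nat) \<Rightarrow> bool" where
  "is_embedding A E B F f \<longleftrightarrow>
     inj_on f A \<and> f ` A \<subseteq> B \<and>
     (\<forall>x\<in>A. \<forall>y\<in>A. (x, y) \<in> E \<longleftrightarrow> (f x, f y) \<in> F)"

definition embeds :: "nat set \<Rightarrow> (nat \<times> nat) set \<Rightarrow> nat set \<Rightarrow> (nat \<times> nat) set \<Rightarrow> bool" where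
  "embeds A E B F \<longleftrightarrow> (\<exists>f. is_embedding A E B F f)"

definition bi_embeddable :: "nat set \<Rightarrow> (nat \<times> nat) set \<Rightarrow> nat set \<Rightarrow> (nat \<times> nat) set \<Rightarrow> bool" where
  "bi_embeddable A E B F \<longleftrightarrow> embeds A E B F \<and> embeds B F A E"

text \<open>Atomic diagram of (A,E) as a 0/1-valued function: at 2m it tells whether m \<in> A,
at 2m+1 whether the pair with Cantor code m lies in E (equality is trivial on nat).\<close>

definition diag :: "nat set \<Rightarrow> (nat \<times> nat) set \<Rightarrow> nat \<Rightarrow> nat" where
  "diag A E n = (if even n then (if n div 2 \<in> A then 1 else 0)
                 else (if prod_decode (n div 2) \<in> E then 1 else 0))"

definition join :: "(nat \<Rightarrow> nat) \<Rightarrow> (nat \<Rightarrow> nat) \<Rightarrow> nat \<Rightarrow> nat" where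
  "join X Y n = (if even n then X (n div 2) else Y (n div 2))"

text \<open>Programs for partial recursive functions. O queries the oracle X; H q queries the
second-level oracle J (used for the halting problem of level-one programs).\<close>

datatype prog = Zer | Suc_p | Proj nat | Orc | Comp prog "prog list"
  | PrimRec prog prog | Mu prog | Hlt prog

inductive ev :: "(nat \<Rightarrow> nat) \<Rightarrow> (prog \<Rightarrow> nat \<Rightarrow> nat) \<Rightarrow> prog \<Rightarrow> nat list \<Rightarrow> nat \<Rightarrow> bool"
  for X :: "nat \<Rightarrow> nat" and J :: "prog \<Rightarrow> nat \<Rightarrow> nat" where
  ev_zero: "ev X J Zer xs 0"
| ev_suc: "ev X J Suc_p (x # xs) (Suc x)"
| ev_proj: "i < length xs \<Longrightarrow> ev X J (Proj i) xs (xs ! i)"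
| ev_orc: "ev X J Orc (x # xs) (X x)"
| ev_hlt: "ev X J (Hlt q) (x # xs) (J q x)"
| ev_comp: "list_all2 (\<lambda>g y. ev X J g xs y) gs ys \<Longrightarrow> ev X J f ys v \<Longrightarrow> ev X J (Comp f gs) xs v"
| ev_pr0: "ev X J g xs v \<Longrightarrow> ev X J (PrimRec g h) (0 # xs) v"
| ev_prS: "ev X J (PrimRec g h) (n # xs) u \<Longrightarrow> ev X J h (n # u # xs) v
            \<Longrightarrow> ev X J (PrimRec g h) (Suc n # xs) v"
| ev_mu: "ev X J f (n # xs) 0 \<Longrightarrow> (\<forall>m<n. \<exists>y. y > 0 \<and> ev X J f (m # xs) y)
            \<Longrightarrow> ev X J (Mu f) xs n"

text \<open>Level one: X-computation (the Hlt instruction is trivialised to the constant 0,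
so these are exactly the X-partial-recursive functions).\<close>

definition halts1 :: "(nat \<Rightarrow> nat) \<Rightarrow> prog \<Rightarrow> nat \<Rightarrow> bool" where
  "halts1 X q x \<longleftrightarrow> (\<exists>v. ev X (\<lambda>_ _. 0) q [x] v)"

text \<open>The halting oracle for X-computations: this is Turing equivalent to the jump X'.\<close>

definition jump_oracle :: "(nat \<Rightarrow> nat) \<Rightarrow> prog \<Rightarrow> nat \<Rightarrow> nat" where
  "jump_oracle X q x = (if halts1 X q x then 1 else 0)"

definition delta2_on :: "(nat \<Rightarrow> nat) \<Rightarrow> nat set \<Rightarrow> (nat \<Rightarrow> nat) \<Rightarrow> bool" where
  "delta2_on X D f \<longleftrightarrow> (\<exists>p. \<forall>x\<in>D. ev X (jump_oracle X) p [x] (f x))"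

definition rel_delta2_bi_emb_categorical :: "nat set \<Rightarrow> (nat \<times> nat) set \<Rightarrow> bool" where
  "rel_delta2_bi_emb_categorical A E \<longleftrightarrow>
     (\<forall>B F. eq_structure B F \<longrightarrow> bi_embeddable A E B F \<longrightarrow>
        (\<exists>f g. is_embedding A E B F f \<and> is_embedding B F A E g \<and>
               delta2_on (join (diag A E) (diag B F)) A f \<and>
               delta2_on (join (diag A E) (diag B F)) B g))"

end

theory Submission
  imports Defs
begin

text \<open>Fix an embedding \<open>e\<close> of \<open>(A, E)\<close> into \<open>(B, F)\<close>. Call a class of \<open>A\<close> hardcoded if it is
  infinite, or finite but with only finitely many classes of \<open>B\<close> at least as large. There are only
  finitely many hardcoded classes, and they are sent to the class of their \<open>e\<close>-image: a finite
  amount of information. Every other class is finite and has infinitely many classes of \<open>B\<close> at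
  least as large, so going through the classes of \<open>A\<close> in order of their least elements, each can
  be sent to a fresh class of \<open>B\<close> of sufficient size, above all earlier choices and avoiding the
  hardcoded targets. ``The class of \<open>b\<close> has at least \<open>m\<close> elements'' is \<open>\<Sigma>\<^sub>1\<close> in the diagram,
  so the sizes and these choices are computable in the jump, and mapping the \<open>r\<close>-th element of
  each class to the \<open>r\<close>-th element of its target gives a \<open>\<Delta>\<^sup>0\<^sub>2\<close> embedding. A backward
  embedding shows that \<open>(B, F)\<close> also has only finitely many infinite classes, so the same
  construction works in the other direction.\<close>

section \<open>Computability relative to an oracle and its jump\<close>

text \<open>\<open>J\<close> interprets the halting instruction: \<open>\<lambda>_ _. 0\<close> for plain \<open>X\<close>-computations and
  \<open>jump_oracle X\<close> for computations in \<open>X'\<close>.\<close>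

definition computable_on ::
  "(nat \<Rightarrow> nat) \<Rightarrow> (prog \<Rightarrow> nat \<Rightarrow> nat) \<Rightarrow> nat \<Rightarrow> (nat list \<Rightarrow> bool) \<Rightarrow> (nat list \<Rightarrow> nat) \<Rightarrow> bool" where
  "computable_on X J n P f \<longleftrightarrow> (\<exists>p. \<forall>xs. length xs = n \<longrightarrow> P xs \<longrightarrow> ev X J p xs (f xs))"

abbreviation computable :: "(nat \<Rightarrow> nat) \<Rightarrow> (prog \<Rightarrow> nat \<Rightarrow> nat) \<Rightarrow> nat \<Rightarrow> (nat list \<Rightarrow> nat) \<Rightarrow> bool" where
  "computable X J n f \<equiv> computable_on X J n (\<lambda>_. True) f"

abbreviation ind :: "bool \<Rightarrow> nat" where
  "ind b \<equiv> (if b then 1 else 0)"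

lemma ev_deterministic: "ev X J p xs v \<Longrightarrow> ev X J p xs w \<Longrightarrow> v = w"
proof (induction arbitrary: w rule: ev.induct)
  case (ev_comp xs gs ys f v)
  from ev_comp.prems obtain ys' where gs: "list_all2 (\<lambda>g y. ev X J g xs y) gs ys'" and f: "ev X J f ys' w"
    by (cases rule: ev.cases) auto
  have "list_all2 (\<lambda>g y. \<forall>w. ev X J g xs w \<longrightarrow> y = w) gs ys"
    using ev_comp.IH(1) by (rule list_all2_mono) auto
  then have "ys' = ys" using gs
    by (induction gs arbitrary: ys ys') (auto simp: list_all2_Cons1)
  then show ?case using ev_comp.IH f by auto
next
  case (ev_prS g h n xs u v)
  from ev_prS.prems show ?case
    by (cases rule: ev.cases) (use ev_prS.IH in blast)+
next
  case (ev_mu f n xs)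
  from ev_mu.prems obtain n' where zero: "ev X J f (n' # xs) 0"
    and pos: "\<forall>m<n'. \<exists>y. y > 0 \<and> ev X J f (m # xs) y" and w: "w = n'"
    by (cases rule: ev.cases) auto
  show ?case
  proof (rule linorder_cases[of n n'])
    assume "n < n'"
    then show ?thesis using pos ev_mu.IH(1) by fastforce
  next
    assume "n' < n"
    then show ?thesis using zero ev_mu.IH(2) by fastforce
  qed (use w in simp)
qed (erule ev.cases; auto)+

lemma ev_Mu_Least:
  assumes "\<And>k. ev X J p (k # xs) (g k)" and "\<exists>k. g k = 0"
  shows "ev X J (Mu p) xs (LEAST k. g k = 0)"
proof (rule ev_mu)
  show "ev X J p ((LEAST k. g k = 0) # xs) 0"
    using assms(1) LeastI_ex[OF assms(2)] by metis
  show "\<forall>m<(LEAST k. g k = 0). \<exists>y>0. ev X J p (m # xs) y"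
    using assms(1) not_less_Least by blast
qed

lemma computable_on_cong:
  "computable_on X J n P f \<Longrightarrow> (\<And>xs. length xs = n \<Longrightarrow> P xs \<Longrightarrow> f xs = g xs) \<Longrightarrow> computable_on X J n P g"
  unfolding computable_on_def by metis

lemma computable_cong:
  "computable X J n f \<Longrightarrow> (\<And>xs. length xs = n \<Longrightarrow> f xs = g xs) \<Longrightarrow> computable X J n g"
  by (rule computable_on_cong)

lemma computable_zero: "computable X J n (\<lambda>_. 0)"
  unfolding computable_on_def by (auto intro: ev_zero)

lemma computable_proj: "i < n \<Longrightarrow> computable X J n (\<lambda>xs. xs ! i)"
  unfolding computable_on_def by (auto intro: ev_proj)

lemma computable_unary:
  assumes "\<And>x xs. ev X J p (x # xs) (h x)"
  shows "computable X J 1 (\<lambda>xs. h (xs ! 0))"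
  unfolding computable_on_def by (rule exI[of _ p]) (auto simp: length_Suc_conv assms)

lemma computable_compose:
  assumes h: "computable_on X J m Q h" and len: "length fs = m" and fs: "\<forall>f\<in>set fs. computable_on X J n P f"
    and Q: "\<And>xs. length xs = n \<Longrightarrow> P xs \<Longrightarrow> Q (map (\<lambda>f. f xs) fs)"
  shows "computable_on X J n P (\<lambda>xs. h (map (\<lambda>f. f xs) fs))"
proof -
  let ?runs = "\<lambda>p f. \<forall>xs. length xs = n \<longrightarrow> P xs \<longrightarrow> ev X J p xs (f xs)"
  from fs have "\<exists>ps. list_all2 ?runs ps fs"
  proof (induction fs)
    case (Cons f fs)
    then obtain ps p where "list_all2 ?runs ps fs" "?runs p f"
      unfolding computable_on_def by auto
    then show ?case by (intro exI[of _ "p # ps"]) auto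
  qed simp
  then obtain ps where ps: "list_all2 ?runs ps fs" ..
  obtain ph where ph: "\<forall>ys. length ys = m \<longrightarrow> Q ys \<longrightarrow> ev X J ph ys (h ys)"
    using h unfolding computable_on_def by auto
  have args: "list_all2 (\<lambda>g y. ev X J g xs y) ps (map (\<lambda>f. f xs) fs)"
    if "length xs = n" "P xs" for xs
    using ps by (induction ps fs rule: list_all2_induct) (auto simp: that)
  show ?thesis unfolding computable_on_def
  proof (intro exI[of _ "Comp ph ps"] allI impI)
    fix xs :: "nat list" assume "length xs = n" "P xs"
    then show "ev X J (Comp ph ps) xs (h (map (\<lambda>f. f xs) fs))"
      using ev_comp[OF args] ph len Q by auto
  qed
qed

lemma computable_compose1:
  "computable X J 1 (\<lambda>xs. u (xs ! 0)) \<Longrightarrow> computable X J n f \<Longrightarrow> computable X J n (\<lambda>xs. u (f xs))"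
  using computable_compose[of X J 1 _ "\<lambda>xs. u (xs ! 0)" "[f]" n] by simp

lemma computable_compose2:
  "computable X J 2 (\<lambda>xs. u (xs ! 0) (xs ! 1)) \<Longrightarrow> computable X J n f \<Longrightarrow> computable X J n g
   \<Longrightarrow> computable X J n (\<lambda>xs. u (f xs) (g xs))"
  using computable_compose[of X J 2 _ "\<lambda>xs. u (xs ! 0) (xs ! 1)" "[f, g]" n] by simp

lemma computable_compose3:
  "computable X J 3 (\<lambda>xs. u (xs ! 0) (xs ! 1) (xs ! 2)) \<Longrightarrow> computable X J n f \<Longrightarrow> computable X J n g
   \<Longrightarrow> computable X J n k \<Longrightarrow> computable X J n (\<lambda>xs. u (f xs) (g xs) (k xs))"
  using computable_compose[of X J 3 _ "\<lambda>xs. u (xs ! 0) (xs ! 1) (xs ! 2)" "[f, g, k]" n]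
  by (simp add: numeral_eq_Suc)

lemma computable_Suc: "computable X J n f \<Longrightarrow> computable X J n (\<lambda>xs. Suc (f xs))"
  by (rule computable_compose1[OF computable_unary]) (rule ev_suc)

lemma computable_oracle: "computable X J n f \<Longrightarrow> computable X J n (\<lambda>xs. X (f xs))"
  by (rule computable_compose1[OF computable_unary]) (rule ev_orc)

lemma computable_const: "computable X J n (\<lambda>_. c)"
  by (induction c) (simp_all add: computable_zero computable_Suc)

lemma computable_rec:
  assumes "computable X J n g" "computable X J (Suc (Suc n)) h"
  shows "computable X J (Suc n) (\<lambda>xs. rec_nat (g (tl xs)) (\<lambda>i u. h (i # u # tl xs)) (hd xs))"
proof -
  obtain pg where pg: "\<forall>xs. length xs = n \<longrightarrow> ev X J pg xs (g xs)"
    using assms(1) unfolding computable_on_def by auto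
  obtain ph where ph: "\<forall>xs. length xs = Suc (Suc n) \<longrightarrow> ev X J ph xs (h xs)"
    using assms(2) unfolding computable_on_def by auto
  have "ev X J (PrimRec pg ph) (k # ys) (rec_nat (g ys) (\<lambda>i u. h (i # u # ys)) k)"
    if "length ys = n" for k ys
    by (induction k) (use pg ph that in \<open>auto intro: ev_pr0 ev_prS\<close>)
  then show ?thesis unfolding computable_on_def
    by (intro exI[of _ "PrimRec pg ph"]) (auto simp: length_Suc_conv)
qed

lemma computable_binary_rec:
  assumes "computable X J 1 g" "computable X J 3 h"
    and "\<And>x y. rec_nat (g [y]) (\<lambda>i u. h [i, u, y]) x = u x y"
  shows "computable X J 2 (\<lambda>xs. u (xs ! 0) (xs ! 1))"
  using computable_rec[of X J 1 g h] assms
  by (auto simp: numeral_eq_Suc length_Suc_conv elim!: computable_cong)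

lemma computable_add: "computable X J n f \<Longrightarrow> computable X J n g \<Longrightarrow> computable X J n (\<lambda>xs. f xs + g xs)"
proof (rule computable_compose2[of _ _ "(+)"])
  show "computable X J 2 (\<lambda>xs. xs ! 0 + xs ! 1)"
  proof (rule computable_binary_rec[where g="\<lambda>xs. xs ! 0" and h="\<lambda>xs. Suc (xs ! 1)"])
    show "rec_nat ([y] ! 0) (\<lambda>i u. Suc ([i, u, y] ! 1)) x = x + y" for x y by (induction x) auto
  qed (auto intro!: computable_proj computable_Suc)
qed

lemma computable_unary_rec:
  assumes "computable X J 2 h" and "\<And>x. rec_nat c (\<lambda>i u. h [i, u]) x = u x"
  shows "computable X J 1 (\<lambda>xs. u (xs ! 0))"
  using computable_rec[of X J 0 "\<lambda>_. c" h] assms computable_const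
  by (auto simp: numeral_eq_Suc length_Suc_conv elim!: computable_cong)

lemma computable_diff: "computable X J n f \<Longrightarrow> computable X J n g \<Longrightarrow> computable X J n (\<lambda>xs. f xs - g xs)"
proof (rule computable_compose2[of _ _ "\<lambda>x y. y - x"])
  have "computable X J 1 (\<lambda>xs. xs ! 0 - 1)"
  proof (rule computable_unary_rec[where h="\<lambda>xs. xs ! 0"])
    show "rec_nat 0 (\<lambda>i u. [i, u] ! 0) x = x - 1" for x by (induction x) auto
  qed (auto intro: computable_proj)
  then have pred: "computable X J 3 (\<lambda>xs. xs ! 1 - 1)"
    by (rule computable_compose1) (simp add: computable_proj)
  show "computable X J 2 (\<lambda>xs. xs ! 1 - xs ! 0)"
  proof (rule computable_binary_rec[where g="\<lambda>xs. xs ! 0" and h="\<lambda>xs. xs ! 1 - 1", OF _ pred])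
    show "rec_nat ([y] ! 0) (\<lambda>i u. [i, u, y] ! 1 - 1) x = y - x" for x y by (induction x) auto
  qed (auto intro: computable_proj)
qed

lemma computable_mult: "computable X J n f \<Longrightarrow> computable X J n g \<Longrightarrow> computable X J n (\<lambda>xs. f xs * g xs)"
proof (rule computable_compose2[of _ _ "(*)"])
  have "computable X J 3 (\<lambda>xs. xs ! 1 + xs ! 2)"
    by (intro computable_add computable_proj) auto
  then show "computable X J 2 (\<lambda>xs. xs ! 0 * xs ! 1)"
  proof (rule computable_binary_rec[where g="\<lambda>_. 0" and h="\<lambda>xs. xs ! 1 + xs ! 2", OF computable_const])
    show "rec_nat 0 (\<lambda>i u. [i, u, y] ! 1 + [i, u, y] ! 2) x = x * y" for x y by (induction x) auto
  qed
qed

lemma computable_ind_eq: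
  assumes "computable X J n f" "computable X J n g"
  shows "computable X J n (\<lambda>xs. ind (f xs = g xs))"
proof -
  have "computable X J n (\<lambda>xs. 1 - ((f xs - g xs) + (g xs - f xs)))"
    by (intro computable_diff computable_add computable_const assms)
  then show ?thesis by (rule computable_cong) auto
qed

lemma computable_ind_le:
  assumes "computable X J n f" "computable X J n g"
  shows "computable X J n (\<lambda>xs. ind (f xs \<le> g xs))"
proof -
  have "computable X J n (\<lambda>xs. 1 - (f xs - g xs))"
    by (intro computable_diff computable_const assms)
  then show ?thesis by (rule computable_cong) auto
qed

lemma computable_ind_conj:
  assumes "computable X J n (\<lambda>xs. ind (P xs))" "computable X J n (\<lambda>xs. ind (Q xs))"
  shows "computable X J n (\<lambda>xs. ind (P xs \<and> Q xs))"
  using computable_mult[OF assms] by (rule computable_cong) auto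

lemma computable_ind_not:
  assumes "computable X J n (\<lambda>xs. ind (P xs))"
  shows "computable X J n (\<lambda>xs. ind (\<not> P xs))"
  using computable_diff[OF computable_const assms, of 1] by (rule computable_cong) auto

lemma computable_ind_disj:
  assumes "computable X J n (\<lambda>xs. ind (P xs))" "computable X J n (\<lambda>xs. ind (Q xs))"
  shows "computable X J n (\<lambda>xs. ind (P xs \<or> Q xs))"
  using computable_ind_not[OF computable_ind_conj[OF computable_ind_not computable_ind_not, OF assms]]
  by simp

lemma computable_if:
  assumes "computable X J n (\<lambda>xs. ind (P xs))" "computable X J n f" "computable X J n g"
  shows "computable X J n (\<lambda>xs. if P xs then f xs else g xs)"
proof -
  have "computable X J n (\<lambda>xs. ind (P xs) * f xs + (1 - ind (P xs)) * g xs)"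
    by (intro computable_add computable_mult computable_diff computable_const assms)
  then show ?thesis by (rule computable_cong) auto
qed

lemma computable_on_Least:
  assumes "computable X J (Suc n) (\<lambda>xs. ind (P xs))"
    and "\<And>xs. length xs = n \<Longrightarrow> Q xs \<Longrightarrow> \<exists>k. P (k # xs)"
  shows "computable_on X J n Q (\<lambda>xs. LEAST k. P (k # xs))"
proof -
  obtain p where p: "\<forall>xs. length xs = Suc n \<longrightarrow> ev X J p xs (ind (\<not> P xs))"
    using computable_ind_not[OF assms(1)] unfolding computable_on_def by auto
  have "ev X J (Mu p) xs (LEAST k. P (k # xs))" if "length xs = n" "Q xs" for xs
  proof -
    have zero_iff: "ind (\<not> b) = 0 \<longleftrightarrow> b" for b by simp
    show ?thesis
      using ev_Mu_Least[of X J p xs "\<lambda>k. ind (\<not> P (k # xs))"] p that assms(2)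
      unfolding zero_iff by auto
  qed
  then show ?thesis unfolding computable_on_def by auto
qed

lemma computable_Least:
  assumes "computable X J (Suc n) (\<lambda>xs. ind (P xs))" and "\<And>xs. length xs = n \<Longrightarrow> \<exists>k. P (k # xs)"
  shows "computable X J n (\<lambda>xs. LEAST k. P (k # xs))"
  using computable_on_Least[OF assms(1)] assms(2) by simp

lemma computable_compose_Cons:
  assumes "computable X J (Suc n) h" "computable X J n f"
  shows "computable X J n (\<lambda>xs. h (f xs # xs))"
proof -
  let ?fs = "f # map (\<lambda>i xs. xs ! i) [0..<n]"
  have "computable X J n (\<lambda>xs. h (map (\<lambda>g. g xs) ?fs))"
    by (rule computable_compose[OF assms(1)]) (auto intro: assms(2) computable_proj)
  then show ?thesis
  proof (rule computable_cong)
    fix xs :: "nat list" assume "length xs = n"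
    then have "map (\<lambda>g. g xs) ?fs = f xs # xs" using map_nth[of xs] by (simp add: comp_def)
    then show "h (map (\<lambda>g. g xs) ?fs) = h (f xs # xs)" by simp
  qed
qed

lemma computable_drop_second:
  assumes "computable X J (Suc n) h"
  shows "computable X J (Suc (Suc n)) (\<lambda>xs. h (hd xs # drop 2 xs))"
proof -
  let ?fs = "(\<lambda>xs. xs ! 0) # map (\<lambda>i xs. xs ! (i + 2)) [0..<n]"
  have "computable X J (Suc (Suc n)) (\<lambda>xs. h (map (\<lambda>g. g xs) ?fs))"
    by (rule computable_compose[OF assms(1)]) (auto intro: computable_proj)
  then show ?thesis
  proof (rule computable_cong)
    fix xs :: "nat list" assume "length xs = Suc (Suc n)"
    then obtain a b ys where "xs = a # b # ys" by (auto simp: length_Suc_conv)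
    then have "map (\<lambda>g. g xs) ?fs = hd xs # drop 2 xs"
      using \<open>length xs = Suc (Suc n)\<close> by (auto intro!: nth_equalityI)
    then show "h (map (\<lambda>g. g xs) ?fs) = h (hd xs # drop 2 xs)" by simp
  qed
qed

lemma card_less_Suc: "card {i. i < Suc y \<and> P i} = card {i. i < y \<and> P i} + ind (P y)"
proof -
  have "{i. i < Suc y \<and> P i} = {i. i < y \<and> P i} \<union> (if P y then {y} else {})"
    by (auto simp: less_Suc_eq)
  then show ?thesis by (auto simp: card_insert_if)
qed

lemma computable_count_below:
  assumes P: "computable X J (Suc n) (\<lambda>ys. ind (P ys))" and f: "computable X J n f"
  shows "computable X J n (\<lambda>xs. card {i. i < f xs \<and> P (i # xs)})"
proof -
  have count: "rec_nat 0 (\<lambda>i u. u + ind (Q i)) k = card {i. i < k \<and> Q i}" for k Q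
    by (induction k) (simp_all add: card_less_Suc)
  have "computable X J (Suc (Suc n)) (\<lambda>ys. ys ! 1 + ind (P (hd ys # drop 2 ys)))"
    using computable_add[OF computable_proj computable_drop_second[OF P]] by simp
  then have "computable X J (Suc n) (\<lambda>ys. rec_nat 0 (\<lambda>i u. u + ind (P (i # tl ys))) (hd ys))"
    by (rule computable_cong[OF computable_rec[OF computable_const]]) simp
  then have "computable X J (Suc n) (\<lambda>ys. card {i. i < hd ys \<and> P (i # tl ys)})"
    by (rule computable_cong) (rule count)
  from computable_compose_Cons[OF this f] show ?thesis by simp
qed

lemma computable_ind_bex:
  assumes "computable X J (Suc n) (\<lambda>ys. ind (P ys))" "computable X J n f"
  shows "computable X J n (\<lambda>xs. ind (\<exists>i < f xs. P (i # xs)))"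
proof -
  have nonzero: "card {i. i < k \<and> Q i} \<noteq> 0 \<longleftrightarrow> (\<exists>i<k. Q i)" for k :: nat and Q
    by (auto simp: card_eq_0_iff)
  have "computable X J n (\<lambda>xs. ind (card {i. i < f xs \<and> P (i # xs)} \<noteq> 0))"
    by (rule computable_ind_not[OF computable_ind_eq[OF computable_count_below[OF assms] computable_const]])
  then show ?thesis unfolding nonzero .
qed

lemma computable_ind_ex_jump:
  assumes "computable X (\<lambda>_ _. 0) 2 (\<lambda>xs. ind (P (xs ! 0) (xs ! 1)))"
  shows "computable X (jump_oracle X) 1 (\<lambda>xs. ind (\<exists>y. P y (xs ! 0)))"
proof -
  let ?J0 = "\<lambda>(_::prog) (_::nat). 0::nat"
  obtain p where p: "\<forall>xs. length xs = 2 \<longrightarrow> ev X ?J0 p xs (ind (\<not> P (xs ! 0) (xs ! 1)))"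
    using computable_ind_not[OF assms] unfolding computable_on_def by auto
  have halts: "halts1 X (Mu p) x \<longleftrightarrow> (\<exists>y. P y x)" for x
  proof
    assume "halts1 X (Mu p) x"
    then obtain v where "ev X ?J0 (Mu p) [x] v" unfolding halts1_def by auto
    then have "ev X ?J0 p [v, x] 0" by (cases rule: ev.cases) auto
    moreover have "ev X ?J0 p [v, x] (ind (\<not> P v x))" using p[rule_format, of "[v, x]"] by simp
    ultimately have "0 = ind (\<not> P v x)" by (rule ev_deterministic)
    then show "\<exists>y. P y x" by (auto split: if_splits)
  next
    assume "\<exists>y. P y x"
    moreover have "ev X ?J0 p [k, x] (ind (\<not> P k x))" for k
      using p[rule_format, of "[k, x]"] by simp
    ultimately have "ev X ?J0 (Mu p) [x] (LEAST y. ind (\<not> P y x) = 0)"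
      by (intro ev_Mu_Least) auto
    then show "halts1 X (Mu p) x" unfolding halts1_def by blast
  qed
  have "ev X (jump_oracle X) (Hlt (Mu p)) (x # xs) (ind (\<exists>y. P y x))" for x xs
    using ev_hlt[of X "jump_oracle X" "Mu p" x xs] halts unfolding jump_oracle_def by simp
  then show ?thesis by (rule computable_unary)
qed

lemma computable_prod_encode:
  assumes "computable X J n f" "computable X J n g"
  shows "computable X J n (\<lambda>xs. prod_encode (f xs, g xs))"
proof -
  have "computable X J 2 (\<lambda>xs. xs ! 1 + Suc (xs ! 0))"
    by (intro computable_add computable_Suc computable_proj) auto
  then have "computable X J 1 (\<lambda>xs. triangle (xs ! 0))"
  proof (rule computable_unary_rec[where c=0])
    show "rec_nat 0 (\<lambda>i u. [i, u] ! 1 + Suc ([i, u] ! 0)) x = triangle x" for x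
      by (induction x) auto
  qed
  then have "computable X J n (\<lambda>xs. triangle (f xs + g xs))"
    by (rule computable_compose1[OF _ computable_add[OF assms]])
  then have "computable X J n (\<lambda>xs. triangle (f xs + g xs) + f xs)"
    by (rule computable_add[OF _ assms(1)])
  then show ?thesis by (rule computable_cong) (simp add: prod_encode_def)
qed

lemma computable_ind_ex_pair_jump:
  assumes "computable X (\<lambda>_ _. 0) 3 (\<lambda>xs. ind (P (xs ! 0) (xs ! 1) (xs ! 2)))"
  shows "computable X (jump_oracle X) 2 (\<lambda>xs. ind (\<exists>y. P y (xs ! 0) (xs ! 1)))"
proof -
  let ?J0 = "\<lambda>(_::prog) (_::nat). 0::nat"
  \<comment> \<open>the pair coded by \<open>z\<close> is found by a bounded search, so \<open>Q\<close> stays decidable\<close>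
  define Q where "Q y z \<longleftrightarrow> (\<exists>a < Suc z. \<exists>b < Suc z. z = prod_encode (a, b) \<and> P y a b)" for y z
  have "computable X ?J0 (Suc 3) (\<lambda>zs. ind (P (zs ! 2) (zs ! 1) (zs ! 0)))"
    by (rule computable_compose3[OF assms]; rule computable_proj; simp)
  moreover have "computable X ?J0 (Suc 3) (\<lambda>zs. ind (zs ! 3 = prod_encode (zs ! 1, zs ! 0)))"
    by (intro computable_ind_eq computable_prod_encode computable_proj) simp_all
  ultimately have "computable X ?J0 (Suc 3)
      (\<lambda>zs. ind (zs ! 3 = prod_encode (zs ! 1, zs ! 0) \<and> P (zs ! 2) (zs ! 1) (zs ! 0)))"
    by (rule computable_ind_conj[rotated])
  from computable_ind_bex[OF this computable_Suc[OF computable_proj[of 2 3]]]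
  have "computable X ?J0 (Suc 2)
      (\<lambda>ys. ind (\<exists>b < Suc (ys ! 2). ys ! 2 = prod_encode (ys ! 0, b) \<and> P (ys ! 1) (ys ! 0) b))"
    by simp
  from computable_ind_bex[OF this computable_Suc[OF computable_proj[of 1 2]]]
  have "computable X ?J0 2 (\<lambda>xs. ind (Q (xs ! 0) (xs ! 1)))"
    by (simp add: Q_def)
  then have "computable X (jump_oracle X) 1 (\<lambda>xs. ind (\<exists>y. Q y (xs ! 0)))"
    by (rule computable_ind_ex_jump)
  then have "computable X (jump_oracle X) 2 (\<lambda>xs. ind (\<exists>y. Q y (prod_encode (xs ! 0, xs ! 1))))"
    by (rule computable_compose1[where u="\<lambda>z. ind (\<exists>y. Q y z)", OF _ computable_prod_encode])
      (rule computable_proj; simp)+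
  moreover have "Q y (prod_encode (a, b)) \<longleftrightarrow> P y a b" for y a b
    unfolding Q_def by (auto simp: le_imp_less_Suc le_prod_encode_1 le_prod_encode_2)
  ultimately show ?thesis by simp
qed

lemma computable_finite_support:
  assumes "finite S" "\<And>x. x \<notin> S \<Longrightarrow> h x = 0" "computable X J n f"
  shows "computable X J n (\<lambda>xs. h (f xs))"
  using assms(1,2)
proof (induction S arbitrary: h rule: finite_induct)
  case empty
  then show ?case using computable_zero by simp
next
  case (insert a S)
  have "computable X J n (\<lambda>xs. (h(a := 0)) (f xs))"
    by (rule insert.IH) (use insert.prems in auto)
  then have "computable X J n (\<lambda>xs. if f xs = a then h a else (h(a := 0)) (f xs))"
    by (rule computable_if[OF computable_ind_eq[OF assms(3) computable_const] computable_const])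
  then show ?case by (rule computable_cong) auto
qed

lemma computable_ind_mem_finite:
  "finite S \<Longrightarrow> computable X J n f \<Longrightarrow> computable X J n (\<lambda>xs. ind (f xs \<in> S))"
  by (rule computable_finite_support) auto

text \<open>In the join of two atomic diagrams the pair with code \<open>m\<close> is looked up at position
  \<open>4m + 2\<close> in the first relation and \<open>4m + 3\<close> in the second; \<open>c\<close> selects the side.\<close>

definition oracle_decides :: "(nat \<Rightarrow> nat) \<Rightarrow> nat \<Rightarrow> (nat \<times> nat) set \<Rightarrow> bool" where
  "oracle_decides X c R \<longleftrightarrow> (\<forall>z t. X (4 * prod_encode (z, t) + 2 + c) = ind ((z, t) \<in> R))"

lemma computable_ind_mem_rel:
  assumes "oracle_decides X c R" "computable X J n f" "computable X J n g"
  shows "computable X J n (\<lambda>xs. ind ((f xs, g xs) \<in> R))"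
proof -
  have "computable X J n (\<lambda>xs. X (4 * prod_encode (f xs, g xs) + 2 + c))"
    by (intro computable_oracle computable_add computable_mult computable_const computable_prod_encode assms(2,3))
  then show ?thesis by (rule computable_cong) (use assms(1) in \<open>simp add: oracle_decides_def\<close>)
qed

lemma computable_hd: "computable X J (Suc n) hd"
  using computable_proj[of 0 "Suc n" X J] by (rule computable_cong) (auto simp: length_Suc_conv)

lemma computable_tl:
  assumes "computable X J n g"
  shows "computable X J (Suc n) (\<lambda>ys. g (tl ys))"
proof -
  let ?fs = "map (\<lambda>i ys. ys ! Suc i) [0..<n]"
  have "computable X J (Suc n) (\<lambda>ys. g (map (\<lambda>h. h ys) ?fs))"
    by (rule computable_compose[OF assms]) (auto intro: computable_proj)
  then show ?thesis
  proof (rule computable_cong)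
    fix ys :: "nat list" assume "length ys = Suc n"
    then have "map (\<lambda>h. h ys) ?fs = tl ys" by (intro nth_equalityI) (auto simp: nth_tl)
    then show "g (map (\<lambda>h. h ys) ?fs) = g (tl ys)" by simp
  qed
qed

lemma computable_count_rel:
  assumes "oracle_decides X c R" "computable X J n f" "computable X J n g"
  shows "computable X J n (\<lambda>xs. card {i. i < f xs \<and> (g xs, i) \<in> R})"
  using computable_count_below[OF computable_ind_mem_rel[OF assms(1) computable_tl[OF assms(3)] computable_hd] assms(2)]
  by simp

section \<open>Class minima and class sizes\<close>

definition is_class_min :: "(nat \<times> nat) set \<Rightarrow> nat \<Rightarrow> bool" where
  "is_class_min R x \<longleftrightarrow> (x, x) \<in> R \<and> (\<forall>y<x. (y, x) \<notin> R)"

text \<open>The disjunct \<open>y = x\<close> keeps the search in \<open>class_min\<close> total off the carrier.\<close>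

definition class_min :: "(nat \<times> nat) set \<Rightarrow> nat \<Rightarrow> nat" where
  "class_min R x = (LEAST y. (x, y) \<in> R \<or> y = x)"

text \<open>The \<open>\<Sigma>\<^sub>1\<close> form of ``the class of \<open>b\<close> has at least \<open>m\<close> elements''.\<close>

definition class_size_ge :: "(nat \<times> nat) set \<Rightarrow> nat \<Rightarrow> nat \<Rightarrow> bool" where
  "class_size_ge R b m \<longleftrightarrow> (\<exists>y. m \<le> card {i. i < y \<and> (b, i) \<in> R})"

context
  fixes S :: "nat set" and R :: "(nat \<times> nat) set"
  assumes equiv: "equiv S R"
begin

lemma rel_sym: "(a, b) \<in> R \<Longrightarrow> (b, a) \<in> R"
  using equiv by (meson equiv_def symD)

lemma rel_trans: "(a, b) \<in> R \<Longrightarrow> (b, c) \<in> R \<Longrightarrow> (a, c) \<in> R"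
  using equiv by (meson equiv_def transD)

lemma rel_refl: "x \<in> S \<Longrightarrow> (x, x) \<in> R"
  using equiv by (meson equiv_def refl_onD)

lemma rel_in_carrier: "(a, b) \<in> R \<Longrightarrow> a \<in> S \<and> b \<in> S"
  using equiv equiv_type by blast

lemma class_min_rel: "x \<in> S \<Longrightarrow> (x, class_min R x) \<in> R"
  using LeastI[of "\<lambda>y. (x, y) \<in> R \<or> y = x" x] rel_refl unfolding class_min_def by auto

lemma is_class_min_class_min:
  assumes "x \<in> S" shows "is_class_min R (class_min R x)"
  unfolding is_class_min_def
proof (intro conjI allI impI notI)
  have r: "(x, class_min R x) \<in> R" using class_min_rel[OF assms] .
  then show "(class_min R x, class_min R x) \<in> R" by (blast intro: rel_trans rel_sym)
  fix y assume "y < class_min R x" "(y, class_min R x) \<in> R"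
  then have "(x, y) \<in> R" "\<not> class_min R x \<le> y" using r by (auto intro: rel_trans rel_sym)
  then show False unfolding class_min_def by (simp add: Least_le)
qed

lemma is_class_min_eq:
  assumes "is_class_min R a" "is_class_min R b" "(a, b) \<in> R"
  shows "a = b"
  using assms rel_sym[OF assms(3)] unfolding is_class_min_def by (metis nat_neq_iff)

lemma class_min_eq:
  assumes "is_class_min R a" "(a, x) \<in> R"
  shows "class_min R x = a"
proof -
  have x: "x \<in> S" using rel_in_carrier[OF assms(2)] by simp
  have "(a, class_min R x) \<in> R" using assms(2) class_min_rel[OF x] by (rule rel_trans)
  then show ?thesis by (rule is_class_min_eq[OF assms(1) is_class_min_class_min[OF x], symmetric])
qed

lemma is_class_min_in: "is_class_min R a \<Longrightarrow> a \<in> S"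
  unfolding is_class_min_def using rel_in_carrier by blast

lemma is_class_min_Image_inj:
  assumes "is_class_min R a" "is_class_min R b" "R `` {a} = R `` {b}"
  shows "a = b"
  using assms is_class_min_eq unfolding is_class_min_def by blast

lemma Image_eq: "(x, y) \<in> R \<Longrightarrow> R `` {x} = R `` {y}"
  using equiv equiv_class_eq_iff by metis

end

lemma ex_card_less_ge_iff:
  "(\<exists>y. m \<le> card {i::nat. i < y \<and> i \<in> S}) \<longleftrightarrow> infinite S \<or> m \<le> card S"
proof
  assume "\<exists>y. m \<le> card {i::nat. i < y \<and> i \<in> S}"
  then obtain y where "m \<le> card {i::nat. i < y \<and> i \<in> S}" ..
  moreover have "finite S \<Longrightarrow> card {i::nat. i < y \<and> i \<in> S} \<le> card S" by (rule card_mono) auto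
  ultimately show "infinite S \<or> m \<le> card S" by auto
next
  assume "infinite S \<or> m \<le> card S"
  then show "\<exists>y. m \<le> card {i::nat. i < y \<and> i \<in> S}"
  proof
    assume "infinite S"
    then obtain T where T: "T \<subseteq> S" "finite T" "card T = m" using infinite_arbitrarily_large by metis
    then obtain y where "\<forall>n\<in>T. n < y" using finite_nat_set_iff_bounded by auto
    then have "card T \<le> card {i. i < y \<and> i \<in> S}" using T by (intro card_mono) auto
    then show ?thesis using T by auto
  next
    assume m: "m \<le> card S"
    show ?thesis
    proof (cases "finite S")
      case True
      then obtain y where "\<forall>n\<in>S. n < y" using finite_nat_set_iff_bounded by auto
      then have "{i. i < y \<and> i \<in> S} = S" by auto
      then show ?thesis using m by metis
    qed (use m in simp)
  qed
qed

lemma class_size_ge_iff: "class_size_ge R b m \<longleftrightarrow> infinite (R `` {b}) \<or> m \<le> card (R `` {b})"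
  using ex_card_less_ge_iff[of m "R `` {b}"] unfolding class_size_ge_def by simp

lemma card_less_strict_mono:
  assumes "y \<in> S" "y < y'"
  shows "card {i::nat. i < y \<and> i \<in> S} < card {i. i < y' \<and> i \<in> S}"
proof -
  have "insert y {i. i < y \<and> i \<in> S} \<subseteq> {i. i < y' \<and> i \<in> S}" using assms by auto
  then have "card (insert y {i. i < y \<and> i \<in> S}) \<le> card {i. i < y' \<and> i \<in> S}"
    by (rule card_mono[rotated]) simp
  then show ?thesis by simp
qed

lemma card_less_inj:
  assumes "y \<in> S" "y' \<in> S" "card {i::nat. i < y \<and> i \<in> S} = card {i. i < y' \<and> i \<in> S}"
  shows "y = y'"
  using card_less_strict_mono[OF assms(1)] card_less_strict_mono[OF assms(2)] assms(3)
  by (metis less_irrefl nat_neq_iff)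

lemma exists_of_card_less:
  assumes "Suc r \<le> card {i::nat. i < y0 \<and> i \<in> S}"
  shows "\<exists>y\<in>S. card {i. i < y \<and> i \<in> S} = r"
proof -
  let ?c = "\<lambda>y. card {i::nat. i < y \<and> i \<in> S}"
  define y where "y = (LEAST y. Suc r \<le> ?c (Suc y))"
  have "y0 \<noteq> 0" using assms by (intro notI) simp
  then have "\<exists>y. Suc r \<le> ?c (Suc y)" using assms by (intro exI[of _ "y0 - 1"]) simp
  then have above: "Suc r \<le> ?c (Suc y)" unfolding y_def by (rule LeastI_ex)
  have below: "?c y \<le> r"
  proof (cases y)
    case (Suc y')
    then have "\<not> Suc r \<le> ?c (Suc y')" unfolding y_def by (metis lessI not_less_Least)
    then show ?thesis using Suc by simp
  qed simp
  from above below have "y \<in> S" "?c y = r" using card_less_Suc[of y "\<lambda>i. i \<in> S"] by (auto split: if_splits)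
  then show ?thesis by blast
qed

lemma computable_ind_class_size_ge:
  assumes "oracle_decides X c R" "computable X (jump_oracle X) n f" "computable X (jump_oracle X) n g"
  shows "computable X (jump_oracle X) n (\<lambda>xs. ind (class_size_ge R (f xs) (g xs)))"
proof -
  have "computable X (\<lambda>_ _. 0) 3 (\<lambda>xs. ind (xs ! 2 \<le> card {i. i < xs ! 0 \<and> (xs ! 1, i) \<in> R}))"
    by (intro computable_ind_le computable_count_rel[OF assms(1)] computable_proj) simp_all
  then have "computable X (jump_oracle X) 2 (\<lambda>xs. ind (class_size_ge R (xs ! 0) (xs ! 1)))"
    unfolding class_size_ge_def by (rule computable_ind_ex_pair_jump)
  then show ?thesis by (rule computable_compose2[OF _ assms(2,3)])
qed

lemma computable_ind_is_class_min:
  assumes "oracle_decides X c R" "computable X J n f"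
  shows "computable X J n (\<lambda>xs. ind (is_class_min R (f xs)))"
proof -
  have "computable X J (Suc 1) (\<lambda>xs. ind ((xs ! 0, xs ! 1) \<in> R))"
    by (intro computable_ind_mem_rel[OF assms(1)] computable_proj) simp_all
  from computable_ind_bex[OF this computable_proj[of 0 1]]
  have "computable X J 1 (\<lambda>xs. ind (\<exists>i < xs ! 0. (i, xs ! 0) \<in> R))" by simp
  then have "computable X J 1 (\<lambda>xs. ind ((xs ! 0, xs ! 0) \<in> R \<and> \<not> (\<exists>i < xs ! 0. (i, xs ! 0) \<in> R)))"
    by (intro computable_ind_conj computable_ind_not computable_ind_mem_rel[OF assms(1)] computable_proj) simp_all
  then have "computable X J 1 (\<lambda>xs. ind (is_class_min R (xs ! 0)))"
    by (rule computable_cong) (simp add: is_class_min_def)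
  then show ?thesis by (rule computable_compose1[OF _ assms(2)])
qed

lemma computable_class_min:
  assumes "oracle_decides X c R" "computable X J n f"
  shows "computable X J n (\<lambda>xs. class_min R (f xs))"
proof -
  have "computable X J (Suc 1) (\<lambda>xs. ind ((xs ! 1, xs ! 0) \<in> R \<or> xs ! 0 = xs ! 1))"
    by (intro computable_ind_disj computable_ind_mem_rel[OF assms(1)] computable_ind_eq computable_proj) simp_all
  from computable_Least[OF this]
  have "computable X J 1 (\<lambda>xs. class_min R (xs ! 0))"
    by (simp add: class_min_def) blast
  then show ?thesis by (rule computable_compose1[OF _ assms(2)])
qed


section \<open>Embedding a structure with finitely many infinite classes\<close>

lemma class_size_ge_mono: "class_size_ge R b m \<Longrightarrow> m' \<le> m \<Longrightarrow> class_size_ge R b m'"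
  unfolding class_size_ge_def by (meson order_trans)

lemma class_size_ge_Image_eq: "R `` {x} = R `` {y} \<Longrightarrow> class_size_ge R x m \<longleftrightarrow> class_size_ge R y m"
  unfolding class_size_ge_iff by simp

locale delta2_embedding =
  fixes X :: "nat \<Rightarrow> nat" and A :: "nat set" and E :: "(nat \<times> nat) set"
    and B :: "nat set" and F :: "(nat \<times> nat) set" and cE cF :: nat and e :: "nat \<Rightarrow> nat"
  assumes equiv_A: "equiv A E" and equiv_B: "equiv B F"
    and decides_E: "oracle_decides X cE E" and decides_F: "oracle_decides X cF F"
    and finite_infinite_classes: "finite {C \<in> A // E. infinite C}"
    and embedding: "is_embedding A E B F e"
begin

lemma e_inj: "inj_on e A" and e_mem: "x \<in> A \<Longrightarrow> e x \<in> B"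
  and e_rel: "x \<in> A \<Longrightarrow> y \<in> A \<Longrightarrow> (x, y) \<in> E \<longleftrightarrow> (e x, e y) \<in> F"
  using embedding unfolding is_embedding_def by auto

definition image_leader :: "nat \<Rightarrow> nat" where
  "image_leader a = class_min F (e a)"

lemma image_leader_rel: "a \<in> A \<Longrightarrow> (e a, image_leader a) \<in> F"
  unfolding image_leader_def by (rule class_min_rel[OF equiv_B e_mem])

lemma is_class_min_image_leader: "a \<in> A \<Longrightarrow> is_class_min F (image_leader a)"
  unfolding image_leader_def by (rule is_class_min_class_min[OF equiv_B e_mem])

lemma class_size_ge_image_leader:
  assumes a: "a \<in> A" and "class_size_ge E a m"
  shows "class_size_ge F (image_leader a) m"
proof -
  have sub: "e ` (E `` {a}) \<subseteq> F `` {e a}"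
    using e_rel[OF a] rel_in_carrier[OF equiv_A] by blast
  have inj: "inj_on e (E `` {a})"
    by (rule inj_on_subset[OF e_inj]) (use rel_in_carrier[OF equiv_A] in blast)
  have "class_size_ge F (e a) m"
  proof (cases "finite (F `` {e a})")
    case True
    then have "finite (E `` {a})" using sub inj finite_imageD finite_subset by metis
    moreover have "card (E `` {a}) \<le> card (F `` {e a})" by (rule card_inj_on_le[OF inj sub True])
    ultimately show ?thesis using assms(2) unfolding class_size_ge_iff by auto
  qed (simp add: class_size_ge_iff)
  then show ?thesis
    using class_size_ge_Image_eq[OF Image_eq[OF equiv_B image_leader_rel[OF a]]] by simp
qed

lemma image_leader_inj:
  assumes "is_class_min E a" "is_class_min E a'" "image_leader a = image_leader a'"
  shows "a = a'"
proof -
  have A: "a \<in> A" "a' \<in> A" using is_class_min_in[OF equiv_A] assms(1,2) by auto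
  have "(e a, e a') \<in> F"
    using image_leader_rel[OF A(1)] image_leader_rel[OF A(2)] assms(3)
    by (metis rel_sym[OF equiv_B] rel_trans[OF equiv_B])
  then show ?thesis using e_rel[OF A] is_class_min_eq[OF equiv_A assms(1,2)] by simp
qed

text \<open>Classes are represented by their minima, called leaders.\<close>

definition large_classes :: "nat \<Rightarrow> nat set" where
  "large_classes a = {b. is_class_min F b \<and> (infinite (F `` {b}) \<or> card (E `` {a}) \<le> card (F `` {b}))}"

definition hardcoded :: "nat set" where
  "hardcoded = {a. is_class_min E a \<and> (infinite (E `` {a}) \<or> finite (large_classes a))}"

definition reserved :: "nat set" where
  "reserved = image_leader ` hardcoded"

definition greedy :: "nat \<Rightarrow> bool" where
  "greedy a \<longleftrightarrow> is_class_min E a \<and> a \<notin> hardcoded"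

text \<open>For greedy \<open>a\<close> this is the size of its class, written as a search that always halts.\<close>

definition greedy_size :: "nat \<Rightarrow> nat" where
  "greedy_size a = (LEAST m. \<not> greedy a \<or> \<not> class_size_ge E a (Suc m))"

definition greedy_choice :: "nat \<Rightarrow> nat \<Rightarrow> nat" where
  "greedy_choice a u = (LEAST b. \<not> greedy a \<or>
     (u \<le> b \<and> is_class_min F b \<and> b \<notin> reserved \<and> class_size_ge F b (greedy_size a)))"

definition greedy_bound :: "nat \<Rightarrow> nat" where
  "greedy_bound k = rec_nat 0 (\<lambda>a u. if greedy a then Suc (greedy_choice a u) else u) k"

text \<open>For greedy \<open>a\<close>, \<open>greedy_bound (Suc a) - 1\<close> is the choice made for \<open>a\<close>.\<close>

definition leader_map :: "nat \<Rightarrow> nat" where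
  "leader_map a = (if a \<in> hardcoded then image_leader a else greedy_bound (Suc a) - 1)"

definition emb :: "nat \<Rightarrow> nat" where
  "emb x = (LEAST y. (leader_map (class_min E x), y) \<in> F \<and>
      card {i. i < y \<and> (leader_map (class_min E x), i) \<in> F} = card {i. i < x \<and> (class_min E x, i) \<in> E})"

lemma finite_infinite_leaders: "finite {a. is_class_min E a \<and> infinite (E `` {a})}"
proof -
  have "inj_on (\<lambda>a. E `` {a}) {a. is_class_min E a \<and> infinite (E `` {a})}"
    by (rule inj_onI) (use is_class_min_Image_inj[OF equiv_A] in auto)
  moreover have "(\<lambda>a. E `` {a}) ` {a. is_class_min E a \<and> infinite (E `` {a})} \<subseteq> {C \<in> A // E. infinite C}"
    using is_class_min_in[OF equiv_A] by (auto intro: quotientI)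
  then have "finite ((\<lambda>a. E `` {a}) ` {a. is_class_min E a \<and> infinite (E `` {a})})"
    by (rule finite_subset[OF _ finite_infinite_classes])
  ultimately show ?thesis by (rule finite_imageD[rotated])
qed

text \<open>If \<open>a\<^sub>0\<close> has the smallest class among these leaders, \<open>image_leader\<close> maps all of
  them injectively into \<open>large_classes a\<^sub>0\<close>, which is finite.\<close>

lemma finite_leaders_with_finite_large_classes:
  "finite {a. is_class_min E a \<and> finite (E `` {a}) \<and> finite (large_classes a)}" (is "finite ?S")
proof (cases "?S = {}")
  case False
  obtain a0 where a0: "a0 \<in> ?S" and least: "\<And>a. a \<in> ?S \<Longrightarrow> card (E `` {a0}) \<le> card (E `` {a})"
    using ex_has_least_nat[of "\<lambda>a. a \<in> ?S" _ "\<lambda>a. card (E `` {a})"] False by blast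
  have "image_leader ` ?S \<subseteq> large_classes a0"
  proof
    fix b assume "b \<in> image_leader ` ?S"
    then obtain a where a: "a \<in> ?S" "b = image_leader a" by auto
    have "a \<in> A" using is_class_min_in[OF equiv_A] a(1) by simp
    moreover have "class_size_ge E a (card (E `` {a}))" unfolding class_size_ge_iff by simp
    ultimately have "class_size_ge F b (card (E `` {a}))"
      using class_size_ge_image_leader a(2) by simp
    then show "b \<in> large_classes a0"
      unfolding large_classes_def class_size_ge_iff
      using least[OF a(1)] is_class_min_image_leader[OF \<open>a \<in> A\<close>] a(2) by auto
  qed
  moreover have "inj_on image_leader ?S" by (rule inj_onI) (use image_leader_inj in auto)
  ultimately show ?thesis using a0 finite_imageD finite_subset by (metis (no_types, lifting) mem_Collect_eq)
qed (metis finite.emptyI)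

lemma finite_hardcoded: "finite hardcoded"
proof -
  have "hardcoded \<subseteq> {a. is_class_min E a \<and> infinite (E `` {a})}
      \<union> {a. is_class_min E a \<and> finite (E `` {a}) \<and> finite (large_classes a)}"
    unfolding hardcoded_def by auto
  then show ?thesis using finite_infinite_leaders finite_leaders_with_finite_large_classes by (meson finite_UnI finite_subset)
qed

lemma finite_reserved: "finite reserved"
  unfolding reserved_def using finite_hardcoded by simp

lemma greedy_finite_class: "greedy a \<Longrightarrow> finite (E `` {a})"
  and greedy_infinite_large_classes: "greedy a \<Longrightarrow> infinite (large_classes a)"
  unfolding greedy_def hardcoded_def by auto

lemma greedy_size_eq: "greedy a \<Longrightarrow> greedy_size a = card (E `` {a})"
  unfolding greedy_size_def class_size_ge_iff
  by (rule Least_equality) (auto simp: greedy_finite_class)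

lemma greedy_choice:
  assumes "greedy a"
  shows "u \<le> greedy_choice a u" "is_class_min F (greedy_choice a u)"
    "greedy_choice a u \<notin> reserved" "class_size_ge F (greedy_choice a u) (greedy_size a)"
proof -
  have "infinite (large_classes a - reserved - {..<u})"
    using greedy_infinite_large_classes[OF assms] finite_reserved by (metis Diff_infinite_finite finite_lessThan)
  then obtain b where "b \<in> large_classes a - reserved - {..<u}" by (metis finite.emptyI ex_in_conv)
  then have "u \<le> b \<and> is_class_min F b \<and> b \<notin> reserved \<and> class_size_ge F b (greedy_size a)"
    unfolding large_classes_def class_size_ge_iff greedy_size_eq[OF assms] by auto
  then have "\<not> greedy a \<or> (u \<le> greedy_choice a u \<and> is_class_min F (greedy_choice a u) \<and>
      greedy_choice a u \<notin> reserved \<and> class_size_ge F (greedy_choice a u) (greedy_size a))"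
    unfolding greedy_choice_def by (rule LeastI[OF disjI2])
  then show "u \<le> greedy_choice a u" "is_class_min F (greedy_choice a u)"
    "greedy_choice a u \<notin> reserved" "class_size_ge F (greedy_choice a u) (greedy_size a)"
    using assms by auto
qed

lemma greedy_bound_Suc: "greedy_bound (Suc a) = (if greedy a then Suc (greedy_choice a (greedy_bound a)) else greedy_bound a)"
  by (simp add: greedy_bound_def)

lemma greedy_bound_mono: "a \<le> a' \<Longrightarrow> greedy_bound a \<le> greedy_bound a'"
proof (rule lift_Suc_mono_le[of greedy_bound])
  show "greedy_bound k \<le> greedy_bound (Suc k)" for k
    using greedy_choice(1)[of k "greedy_bound k"] by (auto simp: greedy_bound_Suc)
qed

lemma leader_map_greedy: "greedy a \<Longrightarrow> leader_map a = greedy_choice a (greedy_bound a)"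
  unfolding leader_map_def by (simp add: greedy_bound_Suc greedy_def)

lemma leader_map_greedy_less:
  assumes "greedy a" "greedy a'" "a < a'"
  shows "leader_map a < leader_map a'"
proof -
  have "leader_map a < greedy_bound (Suc a)"
    using leader_map_greedy[OF assms(1)] by (simp add: greedy_bound_Suc assms(1))
  also have "\<dots> \<le> greedy_bound a'" using assms(3) by (intro greedy_bound_mono) simp
  also have "\<dots> \<le> leader_map a'"
    using leader_map_greedy[OF assms(2)] greedy_choice(1)[OF assms(2)] by simp
  finally show ?thesis .
qed

lemma is_class_min_leader_map:
  assumes "is_class_min E a" shows "is_class_min F (leader_map a)"
proof (cases "a \<in> hardcoded")
  case True
  then show ?thesis using is_class_min_image_leader is_class_min_in[OF equiv_A assms]
    by (simp add: leader_map_def)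
next
  case False
  then have "greedy a" using assms by (simp add: greedy_def)
  then show ?thesis using leader_map_greedy greedy_choice(2) by simp
qed

lemma class_size_ge_leader_map:
  assumes "is_class_min E a" "class_size_ge E a m"
  shows "class_size_ge F (leader_map a) m"
proof (cases "a \<in> hardcoded")
  case True
  then show ?thesis using class_size_ge_image_leader[OF is_class_min_in[OF equiv_A assms(1)] assms(2)]
    by (simp add: leader_map_def)
next
  case False
  then have g: "greedy a" using assms(1) by (simp add: greedy_def)
  have "m \<le> greedy_size a"
    using assms(2) greedy_finite_class[OF g] greedy_size_eq[OF g] unfolding class_size_ge_iff by simp
  then show ?thesis using leader_map_greedy[OF g] greedy_choice(4)[OF g] class_size_ge_mono by metis
qed

lemma leader_map_inj:
  assumes "is_class_min E a" "is_class_min E a'" "leader_map a = leader_map a'"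
  shows "a = a'"
proof -
  have reserved: "leader_map a \<in> reserved" if "a \<in> hardcoded" for a
    using that unfolding leader_map_def reserved_def by simp
  have greedy: "greedy a \<Longrightarrow> leader_map a \<notin> reserved" for a
    using leader_map_greedy greedy_choice(3) by simp
  consider "a \<in> hardcoded" "a' \<in> hardcoded" | "greedy a" "greedy a'"
    | "a \<in> hardcoded" "greedy a'" | "greedy a" "a' \<in> hardcoded"
    using assms(1,2) unfolding greedy_def by blast
  then show ?thesis
  proof cases
    case 1
    then show ?thesis using image_leader_inj[OF assms(1,2)] assms(3) by (simp add: leader_map_def)
  next
    case 2
    then show ?thesis using leader_map_greedy_less assms(3) by (metis less_irrefl nat_neq_iff)
  qed (use reserved greedy assms(3) in metis)+
qed

lemma emb_rank:
  assumes x: "x \<in> A"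
  shows "(leader_map (class_min E x), emb x) \<in> F"
    "card {i. i < emb x \<and> (leader_map (class_min E x), i) \<in> F} = card {i. i < x \<and> (class_min E x, i) \<in> E}"
proof -
  let ?l = "class_min E x"
  let ?t = "leader_map ?l"
  let ?r = "card {i. i < x \<and> (?l, i) \<in> E}"
  have rank_iff: "{i. i < y \<and> (b, i) \<in> R} = {i. i < y \<and> i \<in> R `` {b}}" for y b and R :: "(nat \<times> nat) set"
    by auto
  have "(?l, x) \<in> E" using rel_sym[OF equiv_A class_min_rel[OF equiv_A x]] .
  then have "card {i. i < Suc x \<and> (?l, i) \<in> E} = Suc ?r" by (simp add: card_less_Suc)
  then have "class_size_ge E ?l (Suc ?r)" unfolding class_size_ge_def by (intro exI[of _ "Suc x"]) simp
  then have "class_size_ge F ?t (Suc ?r)"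
    by (rule class_size_ge_leader_map[OF is_class_min_class_min[OF equiv_A x]])
  then obtain y0 where "Suc ?r \<le> card {i. i < y0 \<and> i \<in> F `` {?t}}"
    unfolding class_size_ge_def rank_iff by blast
  then obtain y where "y \<in> F `` {?t}" "card {i. i < y \<and> i \<in> F `` {?t}} = ?r"
    using exists_of_card_less by blast
  then have "(?t, y) \<in> F \<and> card {i. i < y \<and> (?t, i) \<in> F} = ?r" unfolding rank_iff by simp
  then have "(?t, emb x) \<in> F \<and> card {i. i < emb x \<and> (?t, i) \<in> F} = ?r"
    unfolding emb_def by (rule LeastI)
  then show "(?t, emb x) \<in> F" "card {i. i < emb x \<and> (?t, i) \<in> F} = ?r" by auto
qed

lemma emb_rel:
  assumes x: "x \<in> A" and y: "y \<in> A"
  shows "(x, y) \<in> E \<longleftrightarrow> (emb x, emb y) \<in> F"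
proof
  assume "(x, y) \<in> E"
  then have "(class_min E x, y) \<in> E"
    using rel_sym[OF equiv_A class_min_rel[OF equiv_A x]] by (blast intro: rel_trans[OF equiv_A])
  then have "class_min E y = class_min E x"
    by (rule class_min_eq[OF equiv_A is_class_min_class_min[OF equiv_A x]])
  then show "(emb x, emb y) \<in> F"
    using emb_rank(1)[OF x] emb_rank(1)[OF y] by (metis rel_sym[OF equiv_B] rel_trans[OF equiv_B])
next
  assume "(emb x, emb y) \<in> F"
  then have "(leader_map (class_min E x), leader_map (class_min E y)) \<in> F"
    using emb_rank(1)[OF x] emb_rank(1)[OF y] by (metis rel_sym[OF equiv_B] rel_trans[OF equiv_B])
  then have "class_min E x = class_min E y"
    using is_class_min_eq[OF equiv_B] is_class_min_leader_map leader_map_inj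
      is_class_min_class_min[OF equiv_A x] is_class_min_class_min[OF equiv_A y] by metis
  then show "(x, y) \<in> E"
    using class_min_rel[OF equiv_A x] class_min_rel[OF equiv_A y]
    by (metis rel_sym[OF equiv_A] rel_trans[OF equiv_A])
qed

lemma is_embedding_emb: "is_embedding A E B F emb"
  unfolding is_embedding_def
proof (intro conjI ballI)
  show "emb ` A \<subseteq> B" using emb_rank(1) rel_in_carrier[OF equiv_B] by blast
  show "inj_on emb A"
  proof (rule inj_onI)
    fix x y assume x: "x \<in> A" and y: "y \<in> A" and eq: "emb x = emb y"
    have "(emb x, emb x) \<in> F" using emb_rank(1)[OF x] rel_in_carrier[OF equiv_B] rel_refl[OF equiv_B] by blast
    then have "(x, y) \<in> E" using emb_rel[OF x y] eq by simp
    then have l: "(class_min E x, y) \<in> E"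
      using rel_sym[OF equiv_A class_min_rel[OF equiv_A x]] by (blast intro: rel_trans[OF equiv_A])
    then have "class_min E y = class_min E x"
      by (rule class_min_eq[OF equiv_A is_class_min_class_min[OF equiv_A x]])
    then have "card {i. i < x \<and> i \<in> E `` {class_min E x}} = card {i. i < y \<and> i \<in> E `` {class_min E x}}"
      using emb_rank(2)[OF x] emb_rank(2)[OF y] eq by simp
    moreover have "x \<in> E `` {class_min E x}" "y \<in> E `` {class_min E x}"
      using rel_sym[OF equiv_A class_min_rel[OF equiv_A x]] l by auto
    ultimately show "x = y" using card_less_inj by blast
  qed
qed (rule emb_rel)

lemma computable_ind_greedy: "computable X J n f \<Longrightarrow> computable X J n (\<lambda>xs. ind (greedy (f xs)))"
  unfolding greedy_def
  by (intro computable_ind_conj computable_ind_not computable_ind_is_class_min[OF decides_E]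
      computable_ind_mem_finite[OF finite_hardcoded])

lemma computable_greedy_size:
  assumes "computable X (jump_oracle X) n f"
  shows "computable X (jump_oracle X) n (\<lambda>xs. greedy_size (f xs))"
proof -
  have "computable X (jump_oracle X) (Suc 1)
      (\<lambda>ys. ind (\<not> greedy (ys ! 1) \<or> \<not> class_size_ge E (ys ! 1) (Suc (ys ! 0))))"
    by (intro computable_ind_disj computable_ind_not computable_ind_greedy computable_Suc
        computable_ind_class_size_ge[OF decides_E] computable_proj) simp_all
  then have "computable X (jump_oracle X) 1 (\<lambda>xs. greedy_size (xs ! 0))"
  proof (rule computable_cong[OF computable_Least])
    fix xs :: "nat list" assume "length xs = 1"
    show "\<exists>k. \<not> greedy ((k # xs) ! 1) \<or> \<not> class_size_ge E ((k # xs) ! 1) (Suc ((k # xs) ! 0))"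
      by (rule exI[of _ "card (E `` {xs ! 0})"]) (auto simp: class_size_ge_iff greedy_finite_class)
  qed (simp add: greedy_size_def)
  then show ?thesis by (rule computable_compose1[OF _ assms])
qed

lemma computable_greedy_choice:
  "computable X (jump_oracle X) 2 (\<lambda>xs. greedy_choice (xs ! 0) (xs ! 1))"
proof -
  let ?J = "jump_oracle X" and ?n = "Suc 2"
  have b: "computable X ?J ?n (\<lambda>ys. ys ! 0)" and a: "computable X ?J ?n (\<lambda>ys. ys ! 1)"
    and u: "computable X ?J ?n (\<lambda>ys. ys ! 2)" by (simp_all add: computable_proj)
  have "computable X ?J ?n (\<lambda>ys. ind (is_class_min F (ys ! 0) \<and> ys ! 0 \<notin> reserved \<and>
      class_size_ge F (ys ! 0) (greedy_size (ys ! 1))))"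
    by (intro computable_ind_conj computable_ind_not computable_ind_is_class_min[OF decides_F b]
        computable_ind_mem_finite[OF finite_reserved b]
        computable_ind_class_size_ge[OF decides_F b computable_greedy_size[OF a]])
  then have "computable X ?J ?n (\<lambda>ys. ind (\<not> greedy (ys ! 1) \<or> (ys ! 2 \<le> ys ! 0 \<and>
      is_class_min F (ys ! 0) \<and> ys ! 0 \<notin> reserved \<and> class_size_ge F (ys ! 0) (greedy_size (ys ! 1)))))"
    by (intro computable_ind_disj computable_ind_not computable_ind_greedy[OF a]
        computable_ind_conj[OF computable_ind_le[OF u b]])
  then show ?thesis
  proof (rule computable_cong[OF computable_Least])
    fix xs :: "nat list" assume "length xs = 2"
    then obtain a u where xs: "xs = [a, u]" by (auto simp: numeral_eq_Suc length_Suc_conv)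
    show "\<exists>k. \<not> greedy ((k # xs) ! 1) \<or> ((k # xs) ! 2 \<le> (k # xs) ! 0 \<and> is_class_min F ((k # xs) ! 0) \<and>
        (k # xs) ! 0 \<notin> reserved \<and> class_size_ge F ((k # xs) ! 0) (greedy_size ((k # xs) ! 1)))"
      using greedy_choice[of a u] by (cases "greedy a") (auto simp: xs)
    show "(LEAST k. \<not> greedy ((k # xs) ! 1) \<or> ((k # xs) ! 2 \<le> (k # xs) ! 0 \<and> is_class_min F ((k # xs) ! 0) \<and>
        (k # xs) ! 0 \<notin> reserved \<and> class_size_ge F ((k # xs) ! 0) (greedy_size ((k # xs) ! 1))))
      = greedy_choice (xs ! 0) (xs ! 1)"
      by (simp add: xs greedy_choice_def)
  qed
qed

lemma computable_greedy_bound: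
  assumes "computable X (jump_oracle X) n f"
  shows "computable X (jump_oracle X) n (\<lambda>xs. greedy_bound (f xs))"
proof -
  let ?J = "jump_oracle X"
  have a: "computable X ?J 2 (\<lambda>xs. xs ! 0)" and u: "computable X ?J 2 (\<lambda>xs. xs ! 1)"
    by (simp_all add: computable_proj)
  have "computable X ?J 2 (\<lambda>xs. if greedy (xs ! 0) then Suc (greedy_choice (xs ! 0) (xs ! 1)) else xs ! 1)"
    by (rule computable_if[OF computable_ind_greedy[OF a]
          computable_Suc[OF computable_compose2[OF computable_greedy_choice a u]] u])
  then have "computable X ?J 1 (\<lambda>xs. greedy_bound (xs ! 0))"
    by (rule computable_unary_rec[where c=0]) (simp add: greedy_bound_def cong: if_cong)
  then show ?thesis by (rule computable_compose1[OF _ assms])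
qed

lemma computable_leader_map:
  assumes "computable X (jump_oracle X) n f"
  shows "computable X (jump_oracle X) n (\<lambda>xs. leader_map (f xs))"
proof -
  let ?h = "\<lambda>a. if a \<in> hardcoded then image_leader a else 0"
  have "computable X (jump_oracle X) n (\<lambda>xs. ?h (f xs))"
    by (rule computable_finite_support[OF finite_hardcoded _ assms]) simp
  moreover have "computable X (jump_oracle X) n (\<lambda>xs. greedy_bound (Suc (f xs)) - 1)"
    by (rule computable_diff[OF computable_greedy_bound[OF computable_Suc[OF assms]] computable_const])
  ultimately have "computable X (jump_oracle X) n
      (\<lambda>xs. if f xs \<in> hardcoded then ?h (f xs) else greedy_bound (Suc (f xs)) - 1)"
    by (rule computable_if[OF computable_ind_mem_finite[OF finite_hardcoded assms]])
  then show ?thesis by (rule computable_cong) (simp add: leader_map_def)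
qed

lemma delta2_on_emb: "delta2_on X A emb"
proof -
  let ?l = "\<lambda>xs. class_min E (xs ! 1)"
  have l: "computable X (jump_oracle X) (Suc 1) ?l"
    by (intro computable_class_min[OF decides_E] computable_proj) simp
  have "computable X (jump_oracle X) (Suc 1) (\<lambda>xs. ind ((leader_map (?l xs), xs ! 0) \<in> F \<and>
      card {i. i < xs ! 0 \<and> (leader_map (?l xs), i) \<in> F} = card {i. i < xs ! 1 \<and> (?l xs, i) \<in> E}))"
    by (intro computable_ind_conj computable_ind_eq computable_ind_mem_rel[OF decides_F]
        computable_count_rel[OF decides_F] computable_count_rel[OF decides_E] computable_leader_map l
        computable_proj) simp_all
  then have "computable_on X (jump_oracle X) 1 (\<lambda>xs. xs ! 0 \<in> A) (\<lambda>xs. emb (xs ! 0))"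
  proof (rule computable_on_cong[OF computable_on_Least])
    fix xs :: "nat list" assume "length xs = 1" "xs ! 0 \<in> A"
    then show "\<exists>k. (leader_map (?l (k # xs)), (k # xs) ! 0) \<in> F \<and>
        card {i. i < (k # xs) ! 0 \<and> (leader_map (?l (k # xs)), i) \<in> F}
        = card {i. i < (k # xs) ! 1 \<and> (?l (k # xs), i) \<in> E}"
      using emb_rank[of "xs ! 0"] by (intro exI[of _ "emb (xs ! 0)"]) simp
  qed (simp add: emb_def)
  then obtain p where p: "\<forall>xs. length xs = 1 \<longrightarrow> xs ! 0 \<in> A \<longrightarrow> ev X (jump_oracle X) p xs (emb (xs ! 0))"
    unfolding computable_on_def by blast
  show ?thesis unfolding delta2_on_def
    by (intro exI[of _ p] ballI) (use p[rule_format, of "[_]"] in simp)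
qed

end

section \<open>Relative \<open>\<Delta>\<^sup>0\<^sub>2\<close> bi-embeddable categoricity\<close>

lemma oracle_decides_join_diag:
  "oracle_decides (join (diag A E) (diag B F)) 0 E"
  "oracle_decides (join (diag A E) (diag B F)) 1 F"
proof -
  have "(4 * m + 2 + c) div 2 = 2 * m + 1" "odd (2 * m + 1)" if "c \<le> 1" for m c :: nat
    using that by auto
  then show "oracle_decides (join (diag A E) (diag B F)) 0 E" "oracle_decides (join (diag A E) (diag B F)) 1 F"
    unfolding oracle_decides_def join_def diag_def by (simp_all add: even_add)
qed

lemma finite_infinite_classes_embedding:
  assumes equiv_A: "equiv A E" and equiv_B: "equiv B F" and g: "is_embedding B F A E g"
    and fin: "finite {C \<in> A // E. infinite C}"
  shows "finite {C \<in> B // F. infinite C}"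
proof -
  have g_inj: "inj_on g B" and g_mem: "\<And>x. x \<in> B \<Longrightarrow> g x \<in> A"
    and g_rel: "\<And>x y. x \<in> B \<Longrightarrow> y \<in> B \<Longrightarrow> (x, y) \<in> F \<longleftrightarrow> (g x, g y) \<in> E"
    using g unfolding is_embedding_def by auto
  define cls where "cls C = E `` (g ` C)" for C
  have sub: "g ` (F `` {b}) \<subseteq> E `` {g b}" if b: "b \<in> B" for b
  proof
    fix z assume "z \<in> g ` (F `` {b})"
    then obtain c where c: "(b, c) \<in> F" "z = g c" by auto
    then show "z \<in> E `` {g b}" using g_rel[OF b] rel_in_carrier[OF equiv_B c(1)] by simp
  qed
  have cls: "cls (F `` {b}) = E `` {g b}" if b: "b \<in> B" for b
  proof
    show "cls (F `` {b}) \<subseteq> E `` {g b}"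
      unfolding cls_def using sub[OF b] rel_trans[OF equiv_A] by blast
    have "g b \<in> g ` (F `` {b})" using rel_refl[OF equiv_B b] by simp
    then show "E `` {g b} \<subseteq> cls (F `` {b})" unfolding cls_def by blast
  qed
  have "inj_on cls {C \<in> B // F. infinite C}"
  proof (rule inj_onI)
    fix C C' assume "C \<in> {C \<in> B // F. infinite C}" "C' \<in> {C \<in> B // F. infinite C}" and eq: "cls C = cls C'"
    then obtain b b' where b: "b \<in> B" "C = F `` {b}" and b': "b' \<in> B" "C' = F `` {b'}"
      by (auto elim!: quotientE)
    have "E `` {g b} = E `` {g b'}" using eq cls[OF b(1)] cls[OF b'(1)] b(2) b'(2) by simp
    then have "(g b, g b') \<in> E" using equiv_A g_mem[OF b(1)] g_mem[OF b'(1)] by (simp add: equiv_class_eq_iff)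
    then have "(b, b') \<in> F" using g_rel[OF b(1) b'(1)] by simp
    then show "C = C'" using b(2) b'(2) Image_eq[OF equiv_B] by simp
  qed
  moreover have "cls ` {C \<in> B // F. infinite C} \<subseteq> {C \<in> A // E. infinite C}"
  proof clarify
    fix C assume C: "C \<in> B // F" "infinite C"
    then obtain b where b: "b \<in> B" "C = F `` {b}" by (auto elim!: quotientE)
    have "inj_on g C" using g_inj b rel_in_carrier[OF equiv_B] by (blast intro: inj_on_subset)
    then have "infinite (g ` C)" using C(2) finite_imageD by blast
    then have "infinite (E `` {g b})" using sub[OF b(1)] b(2) finite_subset by blast
    then show "cls C \<in> A // E \<and> infinite (cls C)" using cls[OF b(1)] b(2) quotientI[OF g_mem[OF b(1)]] by simp
  qed
  then have "finite (cls ` {C \<in> B // F. infinite C})" by (rule finite_subset[OF _ fin])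
  ultimately show ?thesis by (rule finite_imageD[rotated])
qed

theorem theorem3p1:
  fixes A :: "nat set" and E :: "(nat \<times> nat) set"
  assumes "eq_structure A E"
    and "finite {C \<in> A // E. infinite C}"
  shows "rel_delta2_bi_emb_categorical A E"
  unfolding rel_delta2_bi_emb_categorical_def
proof (intro allI impI)
  fix B F assume "eq_structure B F" and "bi_embeddable A E B F"
  then have equiv: "equiv A E" "equiv B F" using assms(1) by (simp_all add: eq_structure_def)
  from \<open>bi_embeddable A E B F\<close> obtain f g where f: "is_embedding A E B F f" and g: "is_embedding B F A E g"
    unfolding bi_embeddable_def embeds_def by blast
  let ?X = "join (diag A E) (diag B F)"
  interpret AB: delta2_embedding ?X A E B F 0 1 f
    by (rule delta2_embedding.intro[OF equiv oracle_decides_join_diag assms(2) f])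
  interpret BA: delta2_embedding ?X B F A E 1 0 g
    by (rule delta2_embedding.intro[OF equiv(2,1) oracle_decides_join_diag(2,1)
          finite_infinite_classes_embedding[OF equiv g assms(2)] g])
  show "\<exists>f g. is_embedding A E B F f \<and> is_embedding B F A E g \<and> delta2_on ?X A f \<and> delta2_on ?X B g"
    using AB.is_embedding_emb BA.is_embedding_emb AB.delta2_on_emb BA.delta2_on_emb by blast
qed

end
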